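(* Let $X\subseteq\mathbb{R}$ be an interval (bounded or unbounded) with $[0,1]\subset X$, let $\beta>0$ and $K>0$, and let $a\in C(X)$ satisfy $$\max_{x\in X}a(x)=a(0)>a(1)>0,\qquad \lim_{|x|\to\infty}a(x)=-\infty .$$ Assume that $$\inf_{\phi\in H^1(X)\setminus\{0\}}\mathcal{Q}(\phi)<0,\qquad \mathcal{Q}(\phi):=\frac{\beta\int_X|\phi'(x)|^2\,dx-\int_X a(x)\phi(x)^2\,dx}{\int_X\phi(x)^2\,dx}.$$ Consider the steady-state problem: find $\overline{s}_F:X\to\mathbb{R}$ with $$\beta\,\overline{s}_F''(x)+\Big(a(x)-\frac{\overline{S}_F}{K}\Big)\overline{s}_F(x)=0\ \ (x\in X),\qquad \overline{S}_F:=\int_X\overline{s}_F(x)\,dx,$$ $$\overline{s}_F(\cdot)>0,\qquad 0<\overline{S}_F<\infty,$$ together with zero Neumann boundary conditions at the endpoints of $X$ if $X$ is bounded. Then this problem has a unique solution, given by $$\overline{s}_F(x)=\overline{S}_F\,\psi(x)\quad\text{with}\quad \overline{S}_F=K\int_X a(x)\psi(x)\,dx,$$ where $\psi$ is the positive principal eigenfunction of $\mathcal{L}$ normalised by $\int_X\psi\,dx=1$.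
   Context: $\mathcal{L}:=\beta\frac{d^2}{dx^2}+a$ acts on functions on $X$ (with zero Neumann boundary conditions if $X$ is bounded). Its principal eigenpair $(\lambda,\psi)$ satisfies $\mathcal{L}[\psi]=-\lambda\psi$, with $\lambda=\inf_{\phi\in H^1(X)\setminus\{0\}}\mathcal{Q}(\phi)$ simple and $\psi$ the unique positive, smooth eigenfunction associated with $\lambda$, normalised so that $\int_X\psi\,dx=1$. *)

theory Defs
  imports "HOL-Analysis.Analysis"
begin

text \<open>One-dimensional Sobolev space H^1(X), in terms of a representative phi
  (absolutely continuous on compact subintervals of X) together with a weak
  derivative g: phi(y) - phi(x) is the integral of g over [x,y], and both phi and g
  are square integrable on X.\<close>
definition H1_pair :: "real set \<Rightarrow> (real \<Rightarrow> real) \<Rightarrow> (real \<Rightarrow> real) \<Rightarrow> bool" where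
  "H1_pair X phi g \<longleftrightarrow>
     (\<forall>x\<in>X. \<forall>y\<in>X. x \<le> y \<longrightarrow> (g has_integral (phi y - phi x)) {x..y}) \<and>
     (\<lambda>x. (phi x)^2) integrable_on X \<and> (\<lambda>x. (g x)^2) integrable_on X"

text \<open>Since a is bounded above, Q(phi) = +infinity whenever a*phi^2 is not integrable;
  such phi do not affect the infimum and are omitted.\<close>
definition rayleigh_values :: "real set \<Rightarrow> real \<Rightarrow> (real \<Rightarrow> real) \<Rightarrow> real set" where
  "rayleigh_values X \<beta> a =
     {(\<beta> * integral X (\<lambda>x. (g x)^2) - integral X (\<lambda>x. a x * (phi x)^2))
        / integral X (\<lambda>x. (phi x)^2) | phi g.
       H1_pair X phi g \<and> (\<lambda>x. a x * (phi x)^2) integrable_on X \<and>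
       integral X (\<lambda>x. (phi x)^2) \<noteq> 0}"

definition principal_value :: "real set \<Rightarrow> real \<Rightarrow> (real \<Rightarrow> real) \<Rightarrow> real" where
  "principal_value X \<beta> a = Inf (rayleigh_values X \<beta> a)"

text \<open>Classical (C^2 on X) solution of  beta s'' + (a - c) s = 0  on X, with zero
  Neumann condition at every finite endpoint of X (the boundary points of X):
  s' tends to 0 at such an endpoint (within X).\<close>
definition neumann_sol :: "real set \<Rightarrow> real \<Rightarrow> (real \<Rightarrow> real) \<Rightarrow> real \<Rightarrow> (real \<Rightarrow> real) \<Rightarrow> bool" where
  "neumann_sol X \<beta> a c s \<longleftrightarrow>
     (\<exists>s' s''.
        (\<forall>x\<in>X. (s has_real_derivative s' x) (at x within X) \<and>
                 (s' has_real_derivative s'' x) (at x within X) \<and>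
                 \<beta> * s'' x + (a x - c) * s x = 0) \<and>
        (\<forall>e\<in>frontier X. (s' \<longlongrightarrow> 0) (at e within X)))"

definition principal_eigenfunction :: "real set \<Rightarrow> real \<Rightarrow> (real \<Rightarrow> real) \<Rightarrow> (real \<Rightarrow> real) \<Rightarrow> bool" where
  "principal_eigenfunction X \<beta> a psi \<longleftrightarrow>
     neumann_sol X \<beta> a (- principal_value X \<beta> a) psi \<and>
     (\<forall>x\<in>X. psi x > 0) \<and> (\<exists>g. H1_pair X psi g) \<and>
     psi integrable_on X \<and> integral X psi = 1"

definition steady_state :: "real set \<Rightarrow> real \<Rightarrow> (real \<Rightarrow> real) \<Rightarrow> real \<Rightarrow> (real \<Rightarrow> real) \<Rightarrow> bool" where
  "steady_state X \<beta> a K s \<longleftrightarrow>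
     s integrable_on X \<and> (\<forall>x\<in>X. s x > 0) \<and> integral X s > 0 \<and>
     neumann_sol X \<beta> a (integral X s / K) s"

end

theory Submission
  imports Defs
begin

(*
  Integrating the equation for psi over X gives  int_X a psi = - lambda int_X psi - beta int_X psi''
  = - lambda, because psi' tends to 0 at both ends of X: at a finite end by the Neumann condition,
  at an infinite end because a < - lambda there, so that psi is convex, positive and integrable on
  the tail.  Hence S = - K lambda > 0 and S psi is a steady state.
  Conversely, let s be a steady state and c = S / K.  The Wronskian W = psi s' - psi' s satisfies
  beta W' = (c + lambda) psi s and tends to 0 at both ends of X, since psi and s stay bounded there
  while psi' and s' tend to 0.  A strictly monotone function cannot tend to 0 at both ends, so
  c = - lambda; then W is constant, hence 0, so s / psi is constant, and integrating gives s = S psi.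
*)

definition solves_ode ::
    "real set \<Rightarrow> real \<Rightarrow> (real \<Rightarrow> real) \<Rightarrow> real \<Rightarrow> (real \<Rightarrow> real) \<Rightarrow> (real \<Rightarrow> real) \<Rightarrow> (real \<Rightarrow> real) \<Rightarrow> bool"
  where "solves_ode X \<beta> a c u u' u'' \<longleftrightarrow>
    (\<forall>x\<in>X. (u has_real_derivative u' x) (at x within X) \<and>
           (u' has_real_derivative u'' x) (at x within X) \<and>
           \<beta> * u'' x + (a x - c) * u x = 0)"

definition neumann_condition :: "real set \<Rightarrow> (real \<Rightarrow> real) \<Rightarrow> bool"
  where "neumann_condition X u' \<longleftrightarrow> (\<forall>e\<in>frontier X. (u' \<longlongrightarrow> 0) (at e within X))"

lemma neumann_sol_iff:
  "neumann_sol X \<beta> a c u \<longleftrightarrow> (\<exists>u' u''. solves_ode X \<beta> a c u u' u'' \<and> neumann_condition X u')"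
  unfolding neumann_sol_def solves_ode_def neumann_condition_def by blast

lemma neumann_sol_scale:
  assumes "neumann_sol X \<beta> a c u"
  shows "neumann_sol X \<beta> a c (\<lambda>x. k * u x)"
proof -
  obtain u' u'' where ode: "solves_ode X \<beta> a c u u' u''" and nc: "neumann_condition X u'"
    using assms unfolding neumann_sol_iff by blast
  have "solves_ode X \<beta> a c (\<lambda>x. k * u x) (\<lambda>x. k * u' x) (\<lambda>x. k * u'' x)"
    unfolding solves_ode_def
  proof
    fix x assume "x \<in> X"
    then have "(u has_real_derivative u' x) (at x within X)"
      and "(u' has_real_derivative u'' x) (at x within X)"
      and "\<beta> * u'' x + (a x - c) * u x = 0"
      using ode unfolding solves_ode_def by auto
    moreover have "\<beta> * (k * u'' x) + (a x - c) * (k * u x) = k * (\<beta> * u'' x + (a x - c) * u x)"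
      by (simp add: algebra_simps)
    ultimately show "((\<lambda>x. k * u x) has_real_derivative k * u' x) (at x within X) \<and>
      ((\<lambda>x. k * u' x) has_real_derivative k * u'' x) (at x within X) \<and>
      \<beta> * (k * u'' x) + (a x - c) * (k * u x) = 0"
      by (auto intro: DERIV_cmult)
  qed
  moreover have "neumann_condition X (\<lambda>x. k * u' x)"
    using nc tendsto_mult_right_zero unfolding neumann_condition_def by blast
  ultimately show ?thesis
    unfolding neumann_sol_iff by blast
qed

lemma solves_ode_interior:
  assumes "solves_ode X \<beta> a c u u' u''" "x \<in> interior X"
  shows "(u has_real_derivative u' x) (at x)" "(u' has_real_derivative u'' x) (at x)"
proof -
  have "x \<in> X"
    using assms(2) interior_subset by blast
  then have "(u has_real_derivative u' x) (at x within X)"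
    "(u' has_real_derivative u'' x) (at x within X)"
    using assms(1) unfolding solves_ode_def by auto
  then show "(u has_real_derivative u' x) (at x)" "(u' has_real_derivative u'' x) (at x)"
    unfolding at_within_interior[OF assms(2)] by auto
qed

lemma solves_ode_convex_where_below:
  assumes "solves_ode X \<beta> a c u u' u''" "\<beta> > 0" "x \<in> X" "u x > 0" "a x < c"
  shows "u'' x > 0"
proof -
  have "\<beta> * u'' x = (c - a x) * u x"
    using assms(1,3) unfolding solves_ode_def by (auto simp: algebra_simps)
  then have "0 < \<beta> * u'' x"
    using assms(4,5) by simp
  then show ?thesis
    using assms(2) by (rule zero_less_mult_pos)
qed

lemma is_interval_Icc_subset:
  assumes "is_interval (X::real set)" "x \<in> X" "y \<in> X"
  shows "{x..y} \<subseteq> X"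
  using assms(1)[unfolded is_interval_1, rule_format, OF assms(2,3)] by auto

lemma is_interval_atLeastLessThan_Sup_subset:
  assumes "is_interval (X::real set)" "bdd_above X" "p \<in> X"
  shows "{p..<Sup X} \<subseteq> X"
proof
  fix t assume t: "t \<in> {p..<Sup X}"
  then obtain z where "z \<in> X" "t < z"
    using less_cSup_iff[OF _ assms(2)] assms(3) by auto
  then show "t \<in> X"
    using is_interval_Icc_subset[OF assms(1,3) \<open>z \<in> X\<close>] t by auto
qed

lemma is_interval_atLeast_subset:
  assumes "is_interval (X::real set)" "\<not> bdd_above X" "p \<in> X"
  shows "{p..} \<subseteq> X"
proof
  fix t assume "t \<in> {p..}"
  moreover obtain z where "z \<in> X" "t < z"
    using assms(2) by (meson bdd_above.I not_le_imp_less)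
  ultimately show "t \<in> X"
    using is_interval_Icc_subset[OF assms(1,3) \<open>z \<in> X\<close>] by auto
qed

lemma interior_real_between:
  assumes "x \<in> interior (X::real set)"
  obtains y z where "y \<in> X" "z \<in> X" "y < x" "x < z"
proof -
  obtain e where "e > 0" "ball x e \<subseteq> X"
    using assms mem_interior by blast
  then have "x - e/2 \<in> X" "x + e/2 \<in> X"
    by (auto simp: subset_iff dist_real_def)
  then show ?thesis
    using that \<open>e > 0\<close> by simp
qed

lemma strict_mono_on_if_DERIV_pos:
  fixes f :: "real \<Rightarrow> real"
  assumes X: "is_interval X"
    and f': "\<And>x. x \<in> X \<Longrightarrow> (f has_real_derivative f' x) (at x within X)"
    and pos: "\<And>x. x \<in> X \<Longrightarrow> f' x > 0"
  shows "strict_mono_on X f"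
proof (rule strict_mono_onI)
  fix x y assume "x \<in> X" "y \<in> X" "x < y"
  then have sub: "{x..y} \<subseteq> X"
    using X is_interval_Icc_subset by blast
  have "\<exists>w. (f has_real_derivative w) (at z) \<and> 0 < w" if "x < z" "z < y" for z
  proof -
    have z: "z \<in> interior X"
      using interior_mono[OF sub] that by auto
    then have "z \<in> X"
      using interior_subset by blast
    then show ?thesis
      using f'[of z] pos[of z] unfolding at_within_interior[OF z] by blast
  qed
  moreover have "continuous_on {x..y} f"
    by (rule continuous_on_subset[OF DERIV_continuous_on[OF f'] sub])
  ultimately show "f x < f y"
    using DERIV_pos_imp_increasing_open[OF \<open>x < y\<close>] by blast
qed

lemma Sup_in_frontier:
  fixes X :: "real set"
  assumes "bdd_above X" "X \<noteq> {}"
  shows "Sup X \<in> frontier X"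
proof -
  have "Sup X \<notin> interior X"
  proof
    assume "Sup X \<in> interior X"
    then obtain z where "z \<in> X" "Sup X < z"
      by (rule interior_real_between)
    moreover have "z \<le> Sup X"
      using cSup_upper[OF \<open>z \<in> X\<close> assms(1)] .
    ultimately show False
      by linarith
  qed
  then show ?thesis
    using closure_contains_Sup[OF assms(2,1)] by (simp add: frontier_def)
qed

definition at_right_end :: "real set \<Rightarrow> real filter"
  where "at_right_end X = (if bdd_above X then at_left (Sup X) else at_top)"

definition at_left_end :: "real set \<Rightarrow> real filter"
  where "at_left_end X = (if bdd_below X then at_right (Inf X) else at_bot)"

lemma at_right_end_neq_bot [simp]: "at_right_end X \<noteq> bot"
  by (simp add: at_right_end_def)

lemma at_left_end_neq_bot [simp]: "at_left_end X \<noteq> bot"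
  by (simp add: at_left_end_def)

lemma at_left_end_reflect: "at_left_end X = filtermap uminus (at_right_end (uminus ` X))"
  by (simp add: at_left_end_def at_right_end_def Inf_real_def at_bot_mirror
      at_right_minus[of "- Sup (uminus ` X)"])

lemma eventually_in_at_right_end:
  assumes X: "is_interval X" and xy: "x \<in> X" "y \<in> X" "x < y"
  shows "eventually (\<lambda>t. t \<in> X \<and> x < t) (at_right_end X)"
proof (cases "bdd_above X")
  case True
  have "x < Sup X"
    using cSup_upper[OF xy(2) True] xy(3) by linarith
  then have "eventually (\<lambda>t. t \<in> {x<..<Sup X}) (at_right_end X)"
    using eventually_at_left_real True by (simp add: at_right_end_def)
  then show ?thesis
    by (rule eventually_mono) (use is_interval_atLeastLessThan_Sup_subset[OF X True xy(1)] in auto)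
next
  case False
  then have "eventually (\<lambda>t. x < t) (at_right_end X)"
    by (simp add: at_right_end_def)
  then show ?thesis
    by (rule eventually_mono) (use is_interval_atLeast_subset[OF X False xy(1)] in auto)
qed

lemma eventually_in_at_left_end:
  assumes "is_interval X" "x \<in> X" "y \<in> X" "x < y"
  shows "eventually (\<lambda>t. t \<in> X \<and> t < y) (at_left_end X)"
proof -
  have "eventually (\<lambda>t. t \<in> uminus ` X \<and> - y < t) (at_right_end (uminus ` X))"
    using assms by (intro eventually_in_at_right_end) auto
  then show ?thesis
    unfolding at_left_end_reflect eventually_filtermap by (rule eventually_mono) auto
qed

lemma has_integral_reflect_UNIV:
  fixes f :: "real \<Rightarrow> 'a::banach"
  assumes "(f has_integral i) UNIV"
  shows "((\<lambda>x. f (- x)) has_integral i) UNIV"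
proof -
  have "ball 0 B \<subseteq> cbox (-b) (-a)" if "ball 0 B \<subseteq> cbox a b" for a b B :: real
  proof
    fix t :: real assume "t \<in> ball 0 B"
    then have "- t \<in> ball 0 B" by (simp add: dist_real_def)
    then have "- t \<in> cbox a b" using that by blast
    then show "t \<in> cbox (-b) (-a)" by auto
  qed
  moreover have "(\<lambda>x. f (- x)) integrable_on cbox a b \<longleftrightarrow> f integrable_on cbox (-b) (-a)"
    and "integral (cbox a b) (\<lambda>x. f (- x)) = integral (cbox (-b) (-a)) f" for a b :: real
    using integrable_reflect[where f=f and a="-b" and b="-a"]
      integral_reflect[where f=f and a="-b" and b="-a"] by simp_all
  ultimately show ?thesis
    using assms unfolding has_integral_alt'[where s = UNIV] by simp meson
qed

lemma has_integral_reflect_image: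
  fixes f :: "real \<Rightarrow> 'a::banach"
  assumes "(f has_integral i) S"
  shows "((\<lambda>x. f (- x)) has_integral i) (uminus ` S)"
proof -
  have "((\<lambda>x. if - x \<in> S then f (- x) else 0) has_integral i) UNIV"
    using has_integral_reflect_UNIV[of "\<lambda>x. if x \<in> S then f x else 0"] assms
    by (simp add: has_integral_restrict_UNIV)
  moreover have "x \<in> uminus ` S \<longleftrightarrow> - x \<in> S" for x
    by force
  ultimately show ?thesis
    by (simp flip: has_integral_restrict_UNIV[of "uminus ` S"])
qed

lemma frontier_reflect: "frontier (uminus ` X) = uminus ` frontier (X::real set)"
proof -
  have "closure (uminus ` X) = uminus ` closure X"
    by (simp add: closure_injective_linear_image linear_uminus)
  then show ?thesis
    by (simp add: frontier_def interior_negations image_set_diff)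
qed

lemma solves_ode_reflect:
  assumes "solves_ode X \<beta> a c u u' u''"
  shows "solves_ode (uminus ` X) \<beta> (\<lambda>x. a (- x)) c (\<lambda>x. u (- x)) (\<lambda>x. - u' (- x)) (\<lambda>x. u'' (- x))"
  unfolding solves_ode_def
proof
  fix y assume "y \<in> uminus ` X"
  then obtain d1: "(u has_real_derivative u' (- y)) (at (- y) within X)"
    and d2: "(u' has_real_derivative u'' (- y)) (at (- y) within X)"
    and eq: "\<beta> * u'' (- y) + (a (- y) - c) * u (- y) = 0"
    using assms unfolding solves_ode_def by force
  have "uminus ` uminus ` X = X"
    by (simp add: image_image)
  moreover have "(uminus has_real_derivative -1) (at y within uminus ` X)"
    by (auto intro!: derivative_eq_intros)
  ultimately have chain: "(f \<circ> uminus has_real_derivative D * -1) (at y within uminus ` X)"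
    if "(f has_real_derivative D) (at (- y) within X)" for f D
    using DERIV_image_chain[of f D uminus y "uminus ` X" "-1"] that by simp
  show "((\<lambda>x. u (- x)) has_real_derivative - u' (- y)) (at y within uminus ` X) \<and>
    ((\<lambda>x. - u' (- x)) has_real_derivative u'' (- y)) (at y within uminus ` X) \<and>
    \<beta> * u'' (- y) + (a (- y) - c) * u (- y) = 0"
    using chain[OF d1] DERIV_minus[OF chain[OF d2]] eq by (simp add: o_def)
qed

lemma neumann_condition_reflect:
  assumes "neumann_condition X u'"
  shows "neumann_condition (uminus ` X) (\<lambda>x. - u' (- x))"
  unfolding neumann_condition_def
proof
  fix e assume "e \<in> frontier (uminus ` X)"
  then have "(u' \<longlongrightarrow> 0) (at (- e) within X)"
    using assms by (force simp: neumann_condition_def frontier_reflect)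
  moreover have "filtermap uminus (at e within uminus ` X) = at (- e) within X"
    using filtermap_linear_at_within[of uminus e "uminus ` X"]
    by (simp add: bij_uminus open_negations image_image)
  ultimately have "((\<lambda>x. u' (- x)) \<longlongrightarrow> 0) (at e within uminus ` X)"
    using filterlim_filtermap[of u' "nhds 0" uminus "at e within uminus ` X"] by simp
  then show "((\<lambda>x. - u' (- x)) \<longlongrightarrow> 0) (at e within uminus ` X)"
    using tendsto_minus by fastforce
qed

lemma filterlim_at_bot_reflect:
  fixes a :: "real \<Rightarrow> real"
  assumes "filterlim a at_bot (inf at_infinity (principal X))"
  shows "filterlim (\<lambda>x. a (- x)) at_bot (inf at_infinity (principal (uminus ` X)))"
proof -
  have "\<exists>b. \<forall>x. b \<le> norm x \<longrightarrow> x \<in> uminus ` X \<longrightarrow> a (- x) \<le> Z" for Z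
  proof -
    obtain b where "\<forall>x. b \<le> norm x \<longrightarrow> x \<in> X \<longrightarrow> a x \<le> Z"
      using assms unfolding filterlim_at_bot eventually_inf_principal eventually_at_infinity by blast
    then show ?thesis
      by force
  qed
  then show ?thesis
    unfolding filterlim_at_bot eventually_inf_principal eventually_at_infinity by blast
qed

lemma Bfun_at_left_if_deriv_tendsto:
  fixes u u' :: "real \<Rightarrow> real"
  assumes "p < b"
    and du: "\<And>x. p < x \<Longrightarrow> x < b \<Longrightarrow> (u has_real_derivative u' x) (at x)"
    and lim: "(u' \<longlongrightarrow> l) (at_left b)"
  shows "Bfun u (at_left b)"
proof -
  obtain q where "q < b" and q: "\<And>x. q < x \<Longrightarrow> x < b \<Longrightarrow> dist (u' x) l < 1"
    using tendstoD[OF lim, of 1] by (auto simp: eventually_at_left_field)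
  define S where "S = {max p q<..<b}"
  define m where "m = (max p q + b) / 2"
  have m: "m \<in> S"
    using \<open>p < b\<close> \<open>q < b\<close> by (simp add: S_def m_def)
  have bound: "norm (u x - u m) \<le> (\<bar>l\<bar> + 1) * norm (x - m)" if "x \<in> S" for x
  proof (rule field_differentiable_bound[OF _ _ _ that m])
    show "convex S"
      by (simp add: S_def)
    fix z assume z: "z \<in> S"
    then show "(u has_field_derivative u' z) (at z within S)"
      using du by (auto simp: S_def intro: has_field_derivative_at_within)
    have "dist (u' z) l < 1"
      using q z by (simp add: S_def)
    then show "norm (u' z) \<le> \<bar>l\<bar> + 1"
      using abs_triangle_ineq2[of "u' z" l] by (simp add: dist_real_def)
  qed
  have "eventually (\<lambda>x. x \<in> S) (at_left b)"
    using eventually_at_left_real[of "max p q" b] \<open>p < b\<close> \<open>q < b\<close> by (simp add: S_def)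
  then have "eventually (\<lambda>x. norm (u x) \<le> norm (u m) + (\<bar>l\<bar> + 1) * (b - max p q)) (at_left b)"
  proof (rule eventually_mono)
    fix x assume x: "x \<in> S"
    then have "(\<bar>l\<bar> + 1) * norm (x - m) \<le> (\<bar>l\<bar> + 1) * (b - max p q)"
      using m by (intro mult_left_mono) (auto simp: S_def)
    then show "norm (u x) \<le> norm (u m) + (\<bar>l\<bar> + 1) * (b - max p q)"
      using bound[OF x] norm_triangle_ineq2[of "u x" "u m"] by linarith
  qed
  then show ?thesis
    by (rule BfunI)
qed

lemma continuous_on_extend_at_left:
  fixes f :: "real \<Rightarrow> real"
  assumes "p < b" and cont: "continuous_on {p..<b} f" and lim: "(f \<longlongrightarrow> l) (at_left b)"
  shows "continuous_on {p..b} (\<lambda>x. if x < b then f x else l)" (is "continuous_on _ ?g")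
proof (rule continuous_on_IccI[OF _ _ _ \<open>p < b\<close>])
  have g_tendsto: "(?g \<longlongrightarrow> y) F" if "(f \<longlongrightarrow> y) F" "eventually (\<lambda>x. x < b) F" for y F
  proof -
    have "eventually (\<lambda>x. f x = ?g x) F"
      using that(2) by (rule eventually_mono) simp
    then show ?thesis
      by (rule Lim_transform_eventually[OF that(1)])
  qed
  have "{p..(p + b) / 2} \<subseteq> {p..<b}"
    using \<open>p < b\<close> by auto
  then have "continuous_on {p..(p + b) / 2} f"
    by (rule continuous_on_subset[OF cont])
  moreover have "p < (p + b) / 2"
    using \<open>p < b\<close> by simp
  ultimately have "(f \<longlongrightarrow> f p) (at_right p)"
    by (rule continuous_on_Icc_at_rightD)
  moreover have "eventually (\<lambda>x. x < b) (at_right p)"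
    using eventually_at_right_real[OF \<open>p < b\<close>] by (rule eventually_mono) simp
  ultimately show "(?g \<longlongrightarrow> ?g p) (at_right p)"
    using g_tendsto \<open>p < b\<close> by simp
  have "eventually (\<lambda>x. x < b) (at_left b)"
    using eventually_at_left_real[OF \<open>p < b\<close>] by (rule eventually_mono) simp
  then show "(?g \<longlongrightarrow> ?g b) (at_left b)"
    using g_tendsto[OF lim] by simp
  fix x assume "p < x" "x < b"
  then have "(f \<longlongrightarrow> f x) (at x)"
    using continuous_on_interior[OF cont] by (simp add: isCont_def)
  moreover have "eventually (\<lambda>y. y < b) (at x)"
    using order_tendstoD(2)[OF tendsto_ident_at \<open>x < b\<close>] .
  ultimately show "(?g \<longlongrightarrow> ?g x) (at x)"
    using g_tendsto \<open>x < b\<close> by simp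
qed

lemma has_integral_if_tendsto_at_left:
  fixes f f' :: "real \<Rightarrow> real"
  assumes "p < b" and cont: "continuous_on {p..<b} f"
    and df: "\<And>x. p < x \<Longrightarrow> x < b \<Longrightarrow> (f has_real_derivative f' x) (at x)"
    and lim: "(f \<longlongrightarrow> l) (at_left b)"
  shows "(f' has_integral l - f p) {p..b}"
proof -
  let ?g = "\<lambda>x. if x < b then f x else l"
  have "(f' has_integral ?g b - ?g p) {p..b}"
  proof (rule fundamental_theorem_of_calculus_interior[OF less_imp_le[OF \<open>p < b\<close>]])
    show "continuous_on {p..b} ?g"
      by (rule continuous_on_extend_at_left[OF \<open>p < b\<close> cont lim])
    fix x assume "x \<in> {p<..<b}"
    then have x: "p < x" "x < b"
      by auto
    have "(?g has_real_derivative f' x) (at x)"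
      by (rule has_field_derivative_transform_within_open[OF df[OF x] open_greaterThanLessThan])
        (use x in auto)
    then show "(?g has_vector_derivative f' x) (at x)"
      by (simp add: has_real_derivative_iff_has_vector_derivative)
  qed
  then show ?thesis
    using \<open>p < b\<close> by simp
qed

lemma has_integral_Int_atLeast_if_Icc:
  fixes f :: "real \<Rightarrow> real"
  assumes int: "(f has_integral i) {p..b}" and sub: "{p..<b} \<subseteq> X" and le: "\<forall>x\<in>X. x \<le> b"
  shows "(f has_integral i) (X \<inter> {p..})"
proof -
  have "{x \<in> X \<inter> {p..} - {p..b}. f x \<noteq> 0} = {}"
    using le by auto
  then have "negligible {x \<in> X \<inter> {p..} - {p..b}. f x \<noteq> 0}"
    by (metis negligible_empty)
  moreover have "{x \<in> {p..b} - X \<inter> {p..}. f x \<noteq> 0} \<subseteq> {b}"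
  proof
    fix x assume "x \<in> {x \<in> {p..b} - X \<inter> {p..}. f x \<noteq> 0}"
    then show "x \<in> {b}"
      using sub by (cases "x < b") auto
  qed
  then have "negligible {x \<in> {p..b} - X \<inter> {p..}. f x \<noteq> 0}"
    by (rule negligible_subset[OF negligible_sing])
  ultimately show ?thesis
    using has_integral_spike_set_eq[of "X \<inter> {p..}" "{p..b}" f] int by simp
qed

lemma finite_right_end:
  assumes X: "is_interval X" "bdd_above X" and p: "p \<in> X" "p < Sup X"
    and ode: "solves_ode X \<beta> a c u u' u''" and nc: "neumann_condition X u'"
  shows "(u' \<longlongrightarrow> 0) (at_left (Sup X))" "Bfun u (at_left (Sup X))"
    "(u'' has_integral - u' p) (X \<inter> {p..})"
proof -
  define b where "b = Sup X"
  have "p < b" and sub: "{p..<b} \<subseteq> X"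
    using p is_interval_atLeastLessThan_Sup_subset[OF X p(1)] by (simp_all add: b_def)
  have "{p<..<b} \<subseteq> interior X"
    using interior_mono[OF sub] by simp
  then have du: "(u has_real_derivative u' x) (at x)"
    and du': "(u' has_real_derivative u'' x) (at x)" if "p < x" "x < b" for x
    using solves_ode_interior[OF ode] that by auto
  have "{p..<b} - {b} = {p..b} - {b}"
    by auto
  then have "at b within {p..<b} = at_left b"
    using at_within_Icc_at_left[OF \<open>p < b\<close>] unfolding at_within_def by simp
  moreover have "(u' \<longlongrightarrow> 0) (at b within {p..<b})"
    using nc Sup_in_frontier[OF X(2)] p tendsto_within_subset[OF _ sub]
    unfolding neumann_condition_def b_def by blast
  ultimately have lim: "(u' \<longlongrightarrow> 0) (at_left b)"
    by simp
  then show "(u' \<longlongrightarrow> 0) (at_left (Sup X))" "Bfun u (at_left (Sup X))"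
    using Bfun_at_left_if_deriv_tendsto[OF \<open>p < b\<close> du] by (simp_all add: b_def)
  have "continuous_on X u'"
    using ode unfolding solves_ode_def by (blast intro: DERIV_continuous_on)
  then have "(u'' has_integral 0 - u' p) {p..b}"
    using has_integral_if_tendsto_at_left[OF \<open>p < b\<close> _ du' lim] continuous_on_subset[OF _ sub]
    by blast
  then show "(u'' has_integral - u' p) (X \<inter> {p..})"
    using has_integral_Int_atLeast_if_Icc[OF _ sub] cSup_upper[OF _ X(2)] by (simp add: b_def)
qed

lemma deriv_nonpos_if_convex_integral_bounded:
  fixes u u' :: "real \<Rightarrow> real"
  assumes du: "\<And>x. x \<ge> R \<Longrightarrow> (u has_real_derivative u' x) (at x)"
    and mono: "\<And>x y. R \<le> x \<Longrightarrow> x \<le> y \<Longrightarrow> u' x \<le> u' y"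
    and pos: "\<And>x. x \<ge> R \<Longrightarrow> u x > 0"
    and int: "\<And>y. y \<ge> R \<Longrightarrow> integral {R..y} u \<le> C"
    and "x \<ge> R"
  shows "u' x \<le> 0"
proof (rule ccontr)
  assume "\<not> u' x \<le> 0"
  have grow: "u x \<le> u t" if "x \<le> t" for t
  proof (rule DERIV_nonneg_imp_nondecreasing[OF that])
    fix s assume "x \<le> s" "s \<le> t"
    then show "\<exists>d. (u has_real_derivative d) (at s) \<and> d \<ge> 0"
      using du mono[of x s] \<open>x \<ge> R\<close> \<open>\<not> u' x \<le> 0\<close> by (intro exI[of _ "u' s"]) auto
  qed
  \<comment> \<open>Beyond x we have u \<ge> u x > 0, so the integral of u over [x, y] already exceeds C.\<close>
  define y where "y = x + (\<bar>C\<bar> + 1) / u x"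
  have ux: "u x > 0"
    using pos \<open>x \<ge> R\<close> by blast
  then have "x \<le> y"
    by (simp add: y_def)
  have cont: "continuous_on {R..y} u"
    by (intro continuous_at_imp_continuous_on ballI) (metis DERIV_isCont atLeastAtMost_iff du)
  have "\<bar>C\<bar> + 1 = integral {x..y} (\<lambda>_. u x)"
    using ux \<open>x \<le> y\<close> by (simp add: y_def)
  also have "\<dots> \<le> integral {x..y} u"
    using grow \<open>x \<ge> R\<close> integrable_continuous_interval[OF continuous_on_subset[OF cont]]
    by (intro integral_le) auto
  also have "\<dots> \<le> integral {R..y} u"
    using pos \<open>x \<ge> R\<close> integrable_continuous_interval[OF continuous_on_subset[OF cont]]
    by (intro integral_subset_le) (auto simp: less_imp_le)
  also have "\<dots> \<le> C"
    using int \<open>x \<ge> R\<close> \<open>x \<le> y\<close> by simp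
  finally show False
    by linarith
qed

lemma deriv_tendsto_zero_if_convex_positive:
  fixes u u' :: "real \<Rightarrow> real"
  assumes du: "\<And>x. x \<ge> R \<Longrightarrow> (u has_real_derivative u' x) (at x)"
    and mono: "\<And>x y. R \<le> x \<Longrightarrow> x \<le> y \<Longrightarrow> u' x \<le> u' y"
    and nonpos: "\<And>x. x \<ge> R \<Longrightarrow> u' x \<le> 0"
    and pos: "\<And>x. x \<ge> R \<Longrightarrow> u x > 0"
  shows "(u' \<longlongrightarrow> 0) at_top"
proof (rule order_tendstoI)
  fix e :: real assume "e < 0"
  \<comment> \<open>A mean slope \<le> e on [R, y] would make u y \<le> 0.\<close>
  define y where "y = R + u R / - e + 1"
  have "R < y"
    using pos[of R] \<open>e < 0\<close> by (simp add: y_def)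
  then obtain z where z: "R < z" "z < y" "u y - u R = (y - R) * u' z"
    using MVT2[of R y u u'] du by auto
  have "(y - R) * e = - u R + e"
    using \<open>e < 0\<close> by (simp add: y_def field_simps)
  then have "(y - R) * e < (y - R) * u' z"
    using z pos[of y] \<open>R < y\<close> \<open>e < 0\<close> by linarith
  then have "e < u' z"
    using \<open>R < y\<close> by simp
  then show "eventually (\<lambda>x. e < u' x) at_top"
    using mono z(1) unfolding eventually_at_top_linorder
    by (intro exI[of _ z]) (auto intro: less_le_trans)
next
  fix e :: real assume "e > 0"
  then show "eventually (\<lambda>x. u' x < e) at_top"
    using nonpos unfolding eventually_at_top_linorder by (intro exI[of _ R]) (auto intro: le_less_trans)
qed

lemma Bfun_at_top_if_deriv_nonpos:
  fixes u u' :: "real \<Rightarrow> real"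
  assumes du: "\<And>x. x \<ge> R \<Longrightarrow> (u has_real_derivative u' x) (at x)"
    and nonpos: "\<And>x. x \<ge> R \<Longrightarrow> u' x \<le> 0"
    and pos: "\<And>x. x \<ge> R \<Longrightarrow> u x > 0"
  shows "Bfun u at_top"
proof (rule BfunI)
  have "norm (u x) \<le> u R" if "x \<ge> R" for x
  proof -
    have "u x \<le> u R"
    proof (rule DERIV_nonpos_imp_nonincreasing[OF that])
      fix t assume "R \<le> t" "t \<le> x"
      then show "\<exists>d. (u has_real_derivative d) (at t) \<and> d \<le> 0"
        using du nonpos by blast
    qed
    then show ?thesis
      using pos[OF that] by simp
  qed
  then show "eventually (\<lambda>x. norm (u x) \<le> u R) at_top"
    unfolding eventually_at_top_linorder by blast
qed

lemma has_integral_atLeast_if_tendsto: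
  fixes F f :: "real \<Rightarrow> real"
  assumes dF: "\<And>x. p \<le> x \<Longrightarrow> (F has_real_derivative f x) (at x within {p..})"
    and "p \<le> R" and nonneg: "\<And>x. R \<le> x \<Longrightarrow> f x \<ge> 0"
    and lim: "(F \<longlongrightarrow> l) at_top"
  shows "(f has_integral l - F p) {p..}"
proof -
  have ftc: "(f has_integral F y - F x) {x..y}" if "p \<le> x" "x \<le> y" for x y
  proof (rule fundamental_theorem_of_calculus[OF that(2)])
    fix t assume "t \<in> {x..y}"
    then have "(F has_real_derivative f t) (at t within {x..y})"
      using dF[of t] that has_field_derivative_subset[of F "f t" t "{p..}" "{x..y}"] by auto
    then show "(F has_vector_derivative f t) (at t within {x..y})"
      by (simp add: has_real_derivative_iff_has_vector_derivative)
  qed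
  have "(f has_integral l - F R) {R..}"
  proof (rule has_integral_to_inf)
    show "f integrable_on {R..y}" for y
      using ftc[of R y] \<open>p \<le> R\<close> by (cases "R \<le> y") auto
    have "eventually (\<lambda>y. F y - F R = integral {R..y} f) at_top"
      using ftc \<open>p \<le> R\<close> unfolding eventually_at_top_linorder
      by (intro exI[of _ R]) (auto intro: integral_unique[symmetric])
    moreover have "((\<lambda>y. F y - F R) \<longlongrightarrow> l - F R) at_top"
      by (intro tendsto_diff lim tendsto_const)
    ultimately show "((\<lambda>y. integral {R..y} f) \<longlongrightarrow> l - F R) at_top"
      using Lim_transform_eventually by fastforce
  qed (rule nonneg)
  moreover have "(f has_integral F R - F p) {p..R}"
    using ftc \<open>p \<le> R\<close> by simp
  moreover have "{p..R} \<inter> {R..} = {R}"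
    using \<open>p \<le> R\<close> by auto
  ultimately have "(f has_integral (F R - F p) + (l - F R)) ({p..R} \<union> {R..})"
    by (intro has_integral_Un) auto
  moreover have "{p..R} \<union> {R..} = {p..}"
    using \<open>p \<le> R\<close> by auto
  ultimately show ?thesis
    by simp
qed

lemma infinite_right_end:
  assumes X: "is_interval X" "\<not> bdd_above X" "p \<in> X" and \<beta>: "\<beta> > 0"
    and ode: "solves_ode X \<beta> a c u u' u''"
    and pos: "\<forall>x\<in>X. u x > 0" and int: "u integrable_on X"
    and a: "eventually (\<lambda>x. a x < c) at_top"
  shows "(u' \<longlongrightarrow> 0) at_top" "Bfun u at_top" "(u'' has_integral - u' p) (X \<inter> {p..})"
proof -
  have sub: "{p..} \<subseteq> X"
    by (rule is_interval_atLeast_subset[OF X])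
  obtain R where "p < R" and aR: "\<And>x. x \<ge> R \<Longrightarrow> a x < c"
  proof -
    obtain N where "\<And>x. x \<ge> N \<Longrightarrow> a x < c"
      using a unfolding eventually_at_top_linorder by blast
    then show ?thesis
      using that[of "max N (p + 1)"] by auto
  qed
  have R_X: "x \<in> X" and R_interior: "x \<in> interior X" if "x \<ge> R" for x
    using interior_mono[OF sub] sub that \<open>p < R\<close> by auto
  have du: "(u has_real_derivative u' x) (at x)" and du': "(u' has_real_derivative u'' x) (at x)"
    and u_pos: "u x > 0" if "x \<ge> R" for x
    using solves_ode_interior[OF ode R_interior[OF that]] pos R_X[OF that] by auto
  have u''_pos: "u'' x > 0" if "x \<ge> R" for x
    by (rule solves_ode_convex_where_below[OF ode \<beta> R_X[OF that] u_pos[OF that] aR[OF that]])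
  have mono: "u' x \<le> u' y" if "R \<le> x" "x \<le> y" for x y
  proof (rule DERIV_nonneg_imp_nondecreasing[OF that(2)])
    fix t assume "x \<le> t" "t \<le> y"
    then show "\<exists>d. (u' has_real_derivative d) (at t) \<and> d \<ge> 0"
      using du' u''_pos that(1) by (intro exI[of _ "u'' t"]) (auto intro: less_imp_le)
  qed
  have "continuous_on X u"
    using ode unfolding solves_ode_def by (blast intro: DERIV_continuous_on)
  have bound: "integral {R..y} u \<le> integral X u" if "y \<ge> R" for y
  proof (rule integral_subset_le)
    show "{R..y} \<subseteq> X"
      using R_X by auto
    then show "u integrable_on {R..y}"
      using integrable_continuous_interval continuous_on_subset[OF \<open>continuous_on X u\<close>] by blast
  qed (use int pos in \<open>auto simp: less_imp_le\<close>)
  have nonpos: "u' x \<le> 0" if "x \<ge> R" for x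
    using deriv_nonpos_if_convex_integral_bounded[OF du mono u_pos bound that] .
  show lim: "(u' \<longlongrightarrow> 0) at_top"
    using deriv_tendsto_zero_if_convex_positive[OF du mono nonpos u_pos] .
  show "Bfun u at_top"
    using Bfun_at_top_if_deriv_nonpos[OF du nonpos u_pos] .
  have "(u' has_real_derivative u'' x) (at x within {p..})" if "p \<le> x" for x
    using ode sub that has_field_derivative_subset unfolding solves_ode_def by blast
  then have "(u'' has_integral 0 - u' p) {p..}"
    using u''_pos less_imp_le[OF \<open>p < R\<close>]
    by (intro has_integral_atLeast_if_tendsto[OF _ _ _ lim]) (auto intro: less_imp_le)
  then show "(u'' has_integral - u' p) (X \<inter> {p..})"
    using sub by (simp add: Int_absorb1)
qed

lemma right_end_behaviour:
  assumes X: "is_interval X" "p \<in> X" "q \<in> X" "p < q" and \<beta>: "\<beta> > 0"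
    and ode: "solves_ode X \<beta> a c u u' u''" and nc: "neumann_condition X u'"
    and pos: "\<forall>x\<in>X. u x > 0" and int: "u integrable_on X"
    and a: "filterlim a at_bot (inf at_infinity (principal X))"
  shows "(u' \<longlongrightarrow> 0) (at_right_end X) \<and> Bfun u (at_right_end X) \<and>
    (u'' has_integral - u' p) (X \<inter> {p..})"
proof (cases "bdd_above X")
  case True
  have "p < Sup X"
    using X cSup_upper[OF _ True] by fastforce
  then show ?thesis
    using finite_right_end[OF X(1) True X(2) _ ode nc] True by (simp add: at_right_end_def)
next
  case False
  have "eventually (\<lambda>x. x \<in> X \<longrightarrow> a x < c) at_top"
    using a at_top_le_at_infinity
    by (auto simp: filterlim_at_bot_dense eventually_inf_principal dest: filter_leD)
  moreover have "eventually (\<lambda>x. x \<in> X) at_top"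
    using eventually_in_at_right_end[OF X] False by (simp add: at_right_end_def eventually_conj_iff)
  ultimately have "eventually (\<lambda>x. a x < c) at_top"
    by eventually_elim blast
  then show ?thesis
    using infinite_right_end[OF X(1) False X(2) \<beta> ode pos int] False by (simp add: at_right_end_def)
qed

lemma left_end_behaviour:
  assumes X: "is_interval X" "y \<in> X" "p \<in> X" "y < p" and \<beta>: "\<beta> > 0"
    and ode: "solves_ode X \<beta> a c u u' u''" and nc: "neumann_condition X u'"
    and pos: "\<forall>x\<in>X. u x > 0" and int: "u integrable_on X"
    and a: "filterlim a at_bot (inf at_infinity (principal X))"
  shows "(u' \<longlongrightarrow> 0) (at_left_end X) \<and> Bfun u (at_left_end X) \<and>
    (u'' has_integral u' p) (X \<inter> {..p})"
proof -
  have int': "(\<lambda>x. u (- x)) integrable_on uminus ` X"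
    using int has_integral_reflect_image unfolding integrable_on_def by blast
  have pos': "\<forall>x\<in>uminus ` X. u (- x) > 0" and "- p < - y"
    using pos X(4) by auto
  note reflected = right_end_behaviour[OF is_interval_uminusI[OF X(1)]
      imageI[OF X(3)] imageI[OF X(2)] \<open>- p < - y\<close> \<beta> solves_ode_reflect[OF ode]
      neumann_condition_reflect[OF nc] pos' int' filterlim_at_bot_reflect[OF a]]
  have "((\<lambda>x. - (- u' (- x))) \<longlongrightarrow> - 0) (at_right_end (uminus ` X))"
    using reflected by (intro tendsto_minus) blast
  then have "(u' \<longlongrightarrow> 0) (at_left_end X)"
    by (simp add: at_left_end_reflect filterlim_filtermap)
  moreover have "Bfun u (at_left_end X)"
    using reflected by (simp add: at_left_end_reflect Bfun_def eventually_filtermap)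
  moreover have "uminus ` (uminus ` X \<inter> {- p..}) = X \<inter> {..p}"
    by (simp add: image_Int image_image)
  then have "(u'' has_integral u' p) (X \<inter> {..p})"
    using has_integral_reflect_image[OF reflected[THEN conjunct2, THEN conjunct2]] by simp
  ultimately show ?thesis
    by blast
qed

lemma positive_solution_at_ends:
  assumes X: "is_interval X" "p \<in> interior X" and \<beta>: "\<beta> > 0"
    and ode: "solves_ode X \<beta> a c u u' u''" and nc: "neumann_condition X u'"
    and pos: "\<forall>x\<in>X. u x > 0" and int: "u integrable_on X"
    and a: "filterlim a at_bot (inf at_infinity (principal X))"
  shows "(u' \<longlongrightarrow> 0) (at_left_end X)" "Bfun u (at_left_end X)"
    "(u' \<longlongrightarrow> 0) (at_right_end X)" "Bfun u (at_right_end X)"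
    "(u'' has_integral 0) X"
proof -
  obtain y z where yz: "y \<in> X" "z \<in> X" "y < p" "p < z"
    using X(2) by (rule interior_real_between)
  have "p \<in> X"
    using X(2) interior_subset by blast
  note left = left_end_behaviour[OF X(1) yz(1) \<open>p \<in> X\<close> yz(3) \<beta> ode nc pos int a]
  note right = right_end_behaviour[OF X(1) \<open>p \<in> X\<close> yz(2,4) \<beta> ode nc pos int a]
  show "(u' \<longlongrightarrow> 0) (at_left_end X)" "Bfun u (at_left_end X)"
    "(u' \<longlongrightarrow> 0) (at_right_end X)" "Bfun u (at_right_end X)"
    using left right by blast+
  have "negligible ((X \<inter> {..p}) \<inter> (X \<inter> {p..}))"
    by (rule negligible_subset[OF negligible_sing[of p]]) auto
  then have "(u'' has_integral u' p + - u' p) (X \<inter> {..p} \<union> X \<inter> {p..})"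
    using left right by (intro has_integral_Un) blast+
  moreover have "X \<inter> {..p} \<union> X \<inter> {p..} = X"
    by auto
  ultimately show "(u'' has_integral 0) X"
    by simp
qed

lemma wronskian_tendsto_zero:
  fixes u u' v v' :: "'a \<Rightarrow> real"
  assumes "Bfun u F" "(u' \<longlongrightarrow> 0) F" "Bfun v F" "(v' \<longlongrightarrow> 0) F"
  shows "((\<lambda>x. u x * v' x - u' x * v x) \<longlongrightarrow> 0) F"
proof -
  have "((\<lambda>x. u x * v' x) \<longlongrightarrow> 0) F"
    using bounded_bilinear.Bfun_prod_Zfun[OF bounded_bilinear_mult assms(1)] assms(4)
    by (simp add: tendsto_Zfun_iff)
  moreover have "((\<lambda>x. u' x * v x) \<longlongrightarrow> 0) F"
    using bounded_bilinear.Zfun_prod_Bfun[OF bounded_bilinear_mult _ assms(3)] assms(2)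
    by (simp add: tendsto_Zfun_iff)
  ultimately show ?thesis
    using tendsto_diff by fastforce
qed

lemma mono_on_eq_zero_if_tendsto_zero_at_ends:
  fixes f :: "real \<Rightarrow> real"
  assumes X: "is_interval X" and mono: "mono_on X f"
    and left: "(f \<longlongrightarrow> 0) (at_left_end X)" and right: "(f \<longlongrightarrow> 0) (at_right_end X)"
    and x: "x \<in> interior X"
  shows "f x = 0"
proof -
  obtain y z where yz: "y \<in> X" "z \<in> X" "y < x" "x < z"
    using x by (rule interior_real_between)
  have "x \<in> X"
    using x interior_subset by blast
  have "f x \<le> 0"
  proof (rule tendsto_lowerbound[OF right])
    show "eventually (\<lambda>t. f x \<le> f t) (at_right_end X)"
      using eventually_in_at_right_end[OF X \<open>x \<in> X\<close> yz(2,4)]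
      by (rule eventually_mono) (use mono \<open>x \<in> X\<close> in \<open>auto intro: mono_onD\<close>)
  qed simp
  moreover have "0 \<le> f x"
  proof (rule tendsto_upperbound[OF left])
    show "eventually (\<lambda>t. f t \<le> f x) (at_left_end X)"
      using eventually_in_at_left_end[OF X yz(1) \<open>x \<in> X\<close> yz(3)]
      by (rule eventually_mono) (use mono \<open>x \<in> X\<close> in \<open>auto intro: mono_onD\<close>)
  qed simp
  ultimately show ?thesis
    by simp
qed

lemma wronskian_has_derivative:
  assumes \<beta>: "\<beta> > 0" and u: "solves_ode X \<beta> a c u u' u''" and v: "solves_ode X \<beta> a d v v' v''"
    and "x \<in> X"
  shows "((\<lambda>x. u x * v' x - u' x * v x) has_real_derivative (d - c) / \<beta> * (u x * v x))
    (at x within X)"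
proof -
  obtain du: "(u has_real_derivative u' x) (at x within X)"
    and du': "(u' has_real_derivative u'' x) (at x within X)"
    and eu: "\<beta> * u'' x + (a x - c) * u x = 0"
    using u \<open>x \<in> X\<close> unfolding solves_ode_def by blast
  obtain dv: "(v has_real_derivative v' x) (at x within X)"
    and dv': "(v' has_real_derivative v'' x) (at x within X)"
    and ev: "\<beta> * v'' x + (a x - d) * v x = 0"
    using v \<open>x \<in> X\<close> unfolding solves_ode_def by blast
  have "\<beta> * (u x * v'' x - u'' x * v x) = (d - c) * (u x * v x)"
    using eu ev by algebra
  then have "u x * v'' x - u'' x * v x = (d - c) / \<beta> * (u x * v x)"
    using \<beta> by (simp add: field_simps)
  moreover have "((\<lambda>x. u x * v' x - u' x * v x) has_real_derivative
      (u x * v'' x + u' x * v' x) - (u' x * v' x + u'' x * v x)) (at x within X)"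
    by (intro DERIV_diff DERIV_mult' du dv du' dv')
  ultimately show ?thesis
    by (simp add: algebra_simps)
qed

lemma positive_solutions_same_constant:
  assumes X: "is_interval X" "x0 \<in> interior X" "x1 \<in> interior X" "x0 \<noteq> x1" and \<beta>: "\<beta> > 0"
    and u: "solves_ode X \<beta> a c u u' u''" "\<forall>x\<in>X. u x > 0"
    and v: "solves_ode X \<beta> a d v v' v''" "\<forall>x\<in>X. v x > 0"
    and left: "((\<lambda>x. u x * v' x - u' x * v x) \<longlongrightarrow> 0) (at_left_end X)"
    and right: "((\<lambda>x. u x * v' x - u' x * v x) \<longlongrightarrow> 0) (at_right_end X)"
  shows "c = d"
proof (rule ccontr)
  assume "c \<noteq> d"
  define g where "g = (\<lambda>x. (d - c) * (u x * v' x - u' x * v x))"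
  have mono: "strict_mono_on X g"
  proof (rule strict_mono_on_if_DERIV_pos[OF X(1)])
    fix x assume "x \<in> X"
    show "(g has_real_derivative (d - c)\<^sup>2 / \<beta> * (u x * v x)) (at x within X)"
      unfolding g_def
      by (rule DERIV_cong[OF DERIV_cmult[OF wronskian_has_derivative[OF \<beta> u(1) v(1) \<open>x \<in> X\<close>]]])
        (simp add: power2_eq_square)
    show "(d - c)\<^sup>2 / \<beta> * (u x * v x) > 0"
      using \<open>c \<noteq> d\<close> \<beta> u(2) v(2) \<open>x \<in> X\<close> by (intro mult_pos_pos divide_pos_pos) auto
  qed
  have "g x = 0" if "x \<in> interior X" for x
    using mono_on_eq_zero_if_tendsto_zero_at_ends[OF X(1) strict_mono_on_imp_mono_on[OF mono] _ _ that]
      tendsto_mult_right_zero[OF left] tendsto_mult_right_zero[OF right]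
    unfolding g_def by blast
  then have "g x0 = g x1"
    using X(2,3) by simp
  then show False
    using strict_mono_on_eqD[OF mono] X(2-4) interior_subset by blast
qed

lemma wronskian_eq_zero:
  assumes X: "is_interval X" "x0 \<in> interior X" and \<beta>: "\<beta> > 0"
    and u: "solves_ode X \<beta> a c u u' u''" and v: "solves_ode X \<beta> a c v v' v''"
    and left: "((\<lambda>x. u x * v' x - u' x * v x) \<longlongrightarrow> 0) (at_left_end X)"
    and right: "((\<lambda>x. u x * v' x - u' x * v x) \<longlongrightarrow> 0) (at_right_end X)"
    and "x \<in> X"
  shows "u x * v' x - u' x * v x = 0"
proof -
  define W where "W = (\<lambda>x. u x * v' x - u' x * v x)"
  have "\<exists>w. \<forall>x\<in>X. W x = w"
    using wronskian_has_derivative[OF \<beta> u v] is_interval_convex_1[of X] X(1)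
    by (intro has_field_derivative_zero_constant) (auto simp: W_def)
  then obtain w where w: "\<And>x. x \<in> X \<Longrightarrow> W x = w"
    by blast
  then have "mono_on X W"
    by (simp add: mono_on_def)
  then have "W x0 = 0"
    using mono_on_eq_zero_if_tendsto_zero_at_ends[OF X(1) _ _ _ X(2)] left right
    unfolding W_def by blast
  then show ?thesis
    using w \<open>x \<in> X\<close> X(2) interior_subset unfolding W_def by (metis subsetD)
qed

lemma proportional_if_wronskian_eq_zero:
  assumes X: "is_interval X"
    and du: "\<And>x. x \<in> X \<Longrightarrow> (u has_real_derivative u' x) (at x within X)"
    and dv: "\<And>x. x \<in> X \<Longrightarrow> (v has_real_derivative v' x) (at x within X)"
    and pos: "\<forall>x\<in>X. u x > 0" and W: "\<forall>x\<in>X. u x * v' x - u' x * v x = 0"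
  shows "\<exists>k. \<forall>x\<in>X. v x = k * u x"
proof -
  have "((\<lambda>x. v x / u x) has_real_derivative 0) (at x within X)" if "x \<in> X" for x
  proof -
    have "u x \<noteq> 0"
      using pos that by fastforce
    with DERIV_divide[OF dv du] that have "((\<lambda>x. v x / u x) has_real_derivative
        (v' x * u x - v x * u' x) / (u x * u x)) (at x within X)"
      by blast
    moreover have "v' x * u x - v x * u' x = 0"
      using W that by (simp add: algebra_simps)
    ultimately show ?thesis
      by simp
  qed
  then obtain k where "\<And>x. x \<in> X \<Longrightarrow> v x / u x = k"
    using has_field_derivative_zero_constant[of X "\<lambda>x. v x / u x"] is_interval_convex_1 X
    by blast
  then show ?thesis
    using pos by (metis nonzero_eq_divide_eq order_less_irrefl)
qed

lemma has_integral_potential_mult_solution: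
  assumes X: "is_interval X" "p \<in> interior X" and \<beta>: "\<beta> > 0"
    and ode: "solves_ode X \<beta> a c u u' u''" and nc: "neumann_condition X u'"
    and pos: "\<forall>x\<in>X. u x > 0" and int: "(u has_integral m) X"
    and a: "filterlim a at_bot (inf at_infinity (principal X))"
  shows "((\<lambda>x. a x * u x) has_integral c * m) X"
proof -
  have "u integrable_on X"
    using int by blast
  then have "(u'' has_integral 0) X"
    using positive_solution_at_ends(5)[OF X \<beta> ode nc pos _ a] by blast
  then have "((\<lambda>x. c * u x - \<beta> * u'' x) has_integral c * m - \<beta> * 0) X"
    by (intro has_integral_diff has_integral_mult_right int)
  moreover have "c * u x - \<beta> * u'' x = a x * u x" if "x \<in> X" for x
  proof -
    have "\<beta> * u'' x + (a x - c) * u x = 0"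
      using ode that unfolding solves_ode_def by blast
    then show ?thesis
      by algebra
  qed
  ultimately show ?thesis
    using has_integral_eq[of X "\<lambda>x. c * u x - \<beta> * u'' x"] by simp
qed

lemma steady_state_of_eigenfunction:
  assumes "neumann_sol X \<beta> a c psi" "\<forall>x\<in>X. psi x > 0" "(psi has_integral 1) X"
    and "c > 0" "K > 0"
  shows "steady_state X \<beta> a K (\<lambda>x. K * c * psi x)"
proof -
  have "((\<lambda>x. K * c * psi x) has_integral K * c) X"
    using has_integral_mult_right[OF assms(3), of "K * c"] by simp
  then show ?thesis
    unfolding steady_state_def using assms neumann_sol_scale[OF assms(1), of "K * c"]
    by (auto dest: integral_unique)
qed

lemma steady_state_unique:
  assumes X: "is_interval X" "x0 \<in> interior X" "x1 \<in> interior X" "x0 \<noteq> x1"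
    and \<beta>: "\<beta> > 0" and "K > 0"
    and a: "filterlim a at_bot (inf at_infinity (principal X))"
    and psi: "solves_ode X \<beta> a c psi p' p''" "neumann_condition X p'"
      "\<forall>x\<in>X. psi x > 0" "(psi has_integral 1) X"
    and s: "steady_state X \<beta> a K s"
  shows "\<forall>x\<in>X. s x = K * c * psi x"
proof -
  define S where "S = integral X s"
  obtain s' s'' where ode: "solves_ode X \<beta> a (S / K) s s' s''" and nc: "neumann_condition X s'"
    using s unfolding steady_state_def neumann_sol_iff S_def by blast
  have s_pos: "\<forall>x\<in>X. s x > 0" and s_int: "s integrable_on X"
    using s unfolding steady_state_def by auto
  have "psi integrable_on X"
    using psi(4) by blast
  note psi_ends = positive_solution_at_ends[OF X(1,2) \<beta> psi(1-3) this a]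
  note s_ends = positive_solution_at_ends[OF X(1,2) \<beta> ode nc s_pos s_int a]
  have W: "((\<lambda>x. psi x * s' x - p' x * s x) \<longlongrightarrow> 0) (at_left_end X)"
    "((\<lambda>x. psi x * s' x - p' x * s x) \<longlongrightarrow> 0) (at_right_end X)"
    using wronskian_tendsto_zero[OF psi_ends(2,1) s_ends(2,1)]
      wronskian_tendsto_zero[OF psi_ends(4,3) s_ends(4,3)] .
  have "c = S / K"
    using positive_solutions_same_constant[OF X \<beta> psi(1,3) ode s_pos W] .
  then have "\<forall>x\<in>X. psi x * s' x - p' x * s x = 0"
    using wronskian_eq_zero[OF X(1,2) \<beta> psi(1) ode[folded \<open>c = S / K\<close>] W] by blast
  moreover have "(psi has_real_derivative p' x) (at x within X)"
    "(s has_real_derivative s' x) (at x within X)" if "x \<in> X" for x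
    using psi(1) ode that unfolding solves_ode_def by blast+
  ultimately obtain k where k: "\<forall>x\<in>X. s x = k * psi x"
    using proportional_if_wronskian_eq_zero[OF X(1) _ _ psi(3)] by blast
  then have "S = integral X (\<lambda>x. k * psi x)"
    unfolding S_def by (intro integral_cong) auto
  also have "\<dots> = k"
    using integral_unique[OF has_integral_mult_right[OF psi(4), of k]] by simp
  finally have "k = K * c"
    using \<open>c = S / K\<close> \<open>K > 0\<close> by simp
  then show ?thesis
    using k by simp
qed

theorem theorem1:
  fixes X :: "real set" and \<beta> K :: real and a psi :: "real \<Rightarrow> real"
  assumes "is_interval X" and "{0..1} \<subseteq> X"
    and "\<beta> > 0" and "K > 0"
    and "continuous_on X a"
    and "\<forall>x\<in>X. a x \<le> a 0" and "a 0 > a 1" and "a 1 > 0"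
    and "filterlim a at_bot (inf at_infinity (principal X))"
    and "principal_value X \<beta> a < 0"
    and "principal_eigenfunction X \<beta> a psi"
  shows "(\<lambda>x. a x * psi x) integrable_on X \<and>
         steady_state X \<beta> a K (\<lambda>x. K * integral X (\<lambda>y. a y * psi y) * psi x) \<and>
         (\<forall>s. steady_state X \<beta> a K s \<longrightarrow>
              (\<forall>x\<in>X. s x = K * integral X (\<lambda>y. a y * psi y) * psi x))"
proof -
  \<comment> \<open>Continuity of a and its maximum at 0 only serve the existence of psi, which is assumed.\<close>
  define lam where "lam = principal_value X \<beta> a"
  obtain p' p'' where psi: "solves_ode X \<beta> a (- lam) psi p' p''" "neumann_condition X p'"
    using assms(11) unfolding principal_eigenfunction_def neumann_sol_iff lam_def by blast
  have psi_pos: "\<forall>x\<in>X. psi x > 0" and "psi integrable_on X" "integral X psi = 1"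
    using assms(11) unfolding principal_eigenfunction_def by auto
  then have psi_int: "(psi has_integral 1) X"
    by (metis has_integral_integral)
  have interior: "1/4 \<in> interior X" "3/4 \<in> interior X"
    using interior_mono[OF assms(2)] by auto
  have A: "((\<lambda>x. a x * psi x) has_integral - lam) X"
    using has_integral_potential_mult_solution[OF assms(1) interior(1) assms(3) psi psi_pos psi_int
        assms(9)] by simp
  then have I: "integral X (\<lambda>y. a y * psi y) = - lam"
    by (rule integral_unique)
  have "neumann_sol X \<beta> a (- lam) psi" and "- lam > 0"
    using assms(10,11) unfolding principal_eigenfunction_def lam_def by auto
  then have "steady_state X \<beta> a K (\<lambda>x. K * (- lam) * psi x)"
    using steady_state_of_eigenfunction psi_pos psi_int assms(4) by blast
  moreover have "\<forall>x\<in>X. s x = K * (- lam) * psi x" if "steady_state X \<beta> a K s" for s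
    using steady_state_unique[OF assms(1) interior _ assms(3,4,9) psi psi_pos psi_int that] by simp
  ultimately show ?thesis
    unfolding I using A by blast
qed

end
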